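(* There exist absolute constants $C, c > 0$ and $n_0$ such that for every integer $n \ge n_0$ that is a power of $2$, there is a Boolean function $f:\{0,1\}^{2n}\to\{0,1\}$ satisfying: (1) $\mathrm{Inf}^{-}_i[f] = 0$ for all $i \in \{1,\dots,n\}$; (2) $\mathrm{Inf}^{-}_i[f] \le C/n$ for all $i \in \{n+1,\dots,2n\}$; (3) $\varepsilon(f) \ge c$. In particular, there is no absolute constant $c'>0$ such that every $f:\{0,1\}^m\to\{0,1\}$ has a coordinate $i\in[m]$ with $\mathrm{Inf}^{-}_i[f] \ge c'\,\varepsilon(f)\cdot \frac{\log m}{m}$.
   Context: For $x,y\in\{0,1\}^m$, write $x\preccurlyeq y$ if $x_i\le y_i$ for all $i\in[m]$. A function $g:\{0,1\}^m\to\{0,1\}$ is monotone if $x\preccurlyeq y$ implies $g(x)\le g(y)$. For $x\in\{0,1\}^m$ and $i\in[m]$, $x^{\oplus i}$ denotes $x$ with the $i$-th coordinate flipped. For $f:\{0,1\}^m\to\{0,1\}$, the negative influence of coordinate $i$ is $\mathrm{Inf}^{-}_i[f] := \frac{1}{2^{m-1}}\#\{x\in\{0,1\}^m : f(x) > f(x^{\oplus i}) \text{ and } x\preccurlyeq x^{\oplus i}\}$. The distance to monotonicity is $\varepsilon(f) := \min_{g \text{ monotone}} \Pr_{\mathbf{x}\sim\{0,1\}^m}[f(\mathbf{x})\ne g(\mathbf{x})]$, where $\mathbf{x}$ is uniform. *)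

theory Defs
  imports Complex_Main
begin

text \<open>Points of the cube {0,1}^m are encoded as functions nat => bool that vanish
  outside the coordinate set [m] = {0..<m} (coordinates are 0-indexed).\<close>

definition cube :: "nat \<Rightarrow> (nat \<Rightarrow> bool) set" where
  "cube m = {x. \<forall>i. m \<le> i \<longrightarrow> \<not> x i}"

definition pleq :: "(nat \<Rightarrow> bool) \<Rightarrow> (nat \<Rightarrow> bool) \<Rightarrow> bool" where
  "pleq x y \<longleftrightarrow> (\<forall>i. x i \<longrightarrow> y i)"

definition flip :: "(nat \<Rightarrow> bool) \<Rightarrow> nat \<Rightarrow> (nat \<Rightarrow> bool)" where
  "flip x i = x(i := \<not> x i)"

definition monotone_cube :: "nat \<Rightarrow> ((nat \<Rightarrow> bool) \<Rightarrow> bool) \<Rightarrow> bool" where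
  "monotone_cube m g \<longleftrightarrow>
     (\<forall>x\<in>cube m. \<forall>y\<in>cube m. pleq x y \<longrightarrow> (g x \<longrightarrow> g y))"

definition neg_inf :: "nat \<Rightarrow> ((nat \<Rightarrow> bool) \<Rightarrow> bool) \<Rightarrow> nat \<Rightarrow> real" where
  "neg_inf m f i =
     real (card {x\<in>cube m. f x \<and> \<not> f (flip x i) \<and> pleq x (flip x i)}) / 2 ^ (m - 1)"

definition dist_mono :: "nat \<Rightarrow> ((nat \<Rightarrow> bool) \<Rightarrow> bool) \<Rightarrow> real" where
  "dist_mono m f =
     Min {real (card {x\<in>cube m. f x \<noteq> g x}) / 2 ^ m | g. monotone_cube m g}"

end

theory Submission imports Defs begin

text \<open>Split the first n coordinates into 2^(r-1) disjoint blocks of length r and index the last n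
  coordinates by ordered pairs of blocks. Let f x = 1 iff at least three blocks are full, or exactly
  two blocks a < b are full and the coordinate of the pair (a,b) is 0. Then f is monotone in the first
  half, and a negative edge in direction n + (a,b) needs both blocks a and b full, which happens with
  probability 4^-r \<le> 1/(2n). On the other hand a constant fraction of the cube consists of points
  with exactly two full blocks and pair coordinate 0; raising that coordinate maps them injectively to
  points where f drops from 1 to 0, and a monotone function must disagree with f at one end of each
  such edge.\<close>

lemma pleq_flip_iff: "pleq x (flip x i) \<longleftrightarrow> \<not> x i"
  by (auto simp: pleq_def flip_def)

lemma flip_eq_upd_True: "\<not> x i \<Longrightarrow> flip x i = x(i := True)"
  by (simp add: flip_def)

lemma card_cube_fixed:
  assumes "S \<subseteq> {..<m}" "Q \<subseteq> {..<m}" "S \<inter> Q = {}"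
  shows "card {x\<in>cube m. (\<forall>i\<in>S. x i) \<and> (\<forall>i\<in>Q. \<not> x i)} = 2 ^ (m - card S - card Q)"
proof -
  let ?X = "{x\<in>cube m. (\<forall>i\<in>S. x i) \<and> (\<forall>i\<in>Q. \<not> x i)}"
  have fin: "finite S" "finite Q" using assms by (meson finite_lessThan finite_subset)+
  have "bij_betw (\<lambda>x. {i. x i} - S) ?X (Pow ({..<m} - S - Q))"
    by (rule bij_betw_byWitness[where f' = "\<lambda>T i. i \<in> T \<union> S"])
      (use assms in \<open>auto simp: cube_def fun_eq_iff not_less[symmetric]\<close>)
  then have "card ?X = 2 ^ card ({..<m} - S - Q)"
    by (simp add: bij_betw_same_card card_Pow)
  moreover have "card ({..<m} - S - Q) = m - card S - card Q"
  proof -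
    have "{..<m} - S - Q = {..<m} - (S \<union> Q)" by auto
    moreover have "card (S \<union> Q) = card S + card Q" using fin assms(3) by (simp add: card_Un_disjoint)
    ultimately show ?thesis using assms by (simp add: card_Diff_subset fin)
  qed
  ultimately show ?thesis by simp
qed

lemma card_cube_all_True:
  "S \<subseteq> {..<m} \<Longrightarrow> card {x\<in>cube m. \<forall>i\<in>S. x i} = 2 ^ (m - card S)"
  using card_cube_fixed[of S m "{}"] by simp

lemma card_cube: "card (cube m) = 2 ^ m"
  using card_cube_all_True[of "{}" m] by simp

lemma finite_cube: "finite (cube m)"
  using card_cube[of m] card.infinite by fastforce

lemma neg_inf_eq_upward:
  "neg_inf m f i = real (card {x\<in>cube m. f x \<and> \<not> x i \<and> \<not> f (x(i := True))}) / 2 ^ (m - 1)"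
proof -
  have "{x\<in>cube m. f x \<and> \<not> f (flip x i) \<and> pleq x (flip x i)}
      = {x\<in>cube m. f x \<and> \<not> x i \<and> \<not> f (x(i := True))}"
    by (auto simp: pleq_flip_iff flip_eq_upd_True)
  then show ?thesis by (simp add: neg_inf_def)
qed

lemma neg_inf_eq_0I:
  assumes "\<And>x. x \<in> cube m \<Longrightarrow> f x \<Longrightarrow> \<not> x i \<Longrightarrow> f (x(i := True))"
  shows "neg_inf m f i = 0"
proof -
  have no_edges: "{x\<in>cube m. f x \<and> \<not> x i \<and> \<not> f (x(i := True))} = {}" using assms by blast
  show ?thesis unfolding neg_inf_eq_upward no_edges by simp
qed

lemma neg_inf_le_if_support:
  assumes "S \<subseteq> {..<m}"
    and "\<And>x. x \<in> cube m \<Longrightarrow> f x \<Longrightarrow> \<not> x i \<Longrightarrow> \<not> f (x(i := True)) \<Longrightarrow> \<forall>t\<in>S. x t"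
  shows "neg_inf m f i \<le> 2 / 2 ^ card S"
proof -
  let ?Z = "{x\<in>cube m. f x \<and> \<not> x i \<and> \<not> f (x(i := True))}"
  have "card ?Z \<le> card {x\<in>cube m. \<forall>t\<in>S. x t}"
    using assms(2) by (intro card_mono) (auto intro: finite_subset[OF _ finite_cube])
  also have "\<dots> = 2 ^ (m - card S)" using assms(1) by (rule card_cube_all_True)
  finally have "real (card ?Z) * 2 ^ card S \<le> 2 ^ (m - card S) * 2 ^ card S"
    by (simp add: numeral_power_le_of_nat_cancel_iff)
  also have "\<dots> = 2 ^ m"
    using card_mono[OF _ assms(1)] by (simp add: power_add[symmetric])
  also have "\<dots> \<le> 2 * 2 ^ (m - 1)" by (cases m) simp_all
  finally show ?thesis by (simp add: neg_inf_eq_upward field_simps)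
qed

lemma card_le_twice_disagreements:
  assumes g: "monotone_cube m g" and inj: "inj_on \<phi> A"
    and drop: "\<And>w. w \<in> A \<Longrightarrow> w \<in> cube m \<and> \<phi> w \<in> cube m \<and> pleq w (\<phi> w) \<and> f w \<and> \<not> f (\<phi> w)"
  shows "card A \<le> 2 * card {x\<in>cube m. f x \<noteq> g x}"
proof -
  let ?D = "{x\<in>cube m. f x \<noteq> g x}"
  have finD: "finite ?D" using finite_cube by simp
  have finA: "finite A" using drop by (blast intro: finite_subset[OF _ finite_cube])
  have "A \<subseteq> ?D \<union> {w\<in>A. \<phi> w \<in> ?D}"
  proof
    fix w assume "w \<in> A"
    moreover from this have "g w \<longrightarrow> g (\<phi> w)"
      using g drop by (auto simp: monotone_cube_def)
    ultimately show "w \<in> ?D \<union> {w\<in>A. \<phi> w \<in> ?D}" using drop by auto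
  qed
  then have "card A \<le> card (?D \<union> {w\<in>A. \<phi> w \<in> ?D})"
    using finD finA by (intro card_mono) auto
  also have "\<dots> \<le> card ?D + card {w\<in>A. \<phi> w \<in> ?D}" by (rule card_Un_le)
  also have "card {w\<in>A. \<phi> w \<in> ?D} = card (\<phi> ` {w\<in>A. \<phi> w \<in> ?D})"
    using inj by (intro card_image[symmetric]) (auto intro: inj_on_subset)
  also have "\<dots> \<le> card ?D" using finD by (intro card_mono) auto
  finally show ?thesis by simp
qed

lemma dist_mono_ge_card_drops:
  assumes inj: "inj_on \<phi> A"
    and drop: "\<And>w. w \<in> A \<Longrightarrow> w \<in> cube m \<and> \<phi> w \<in> cube m \<and> pleq w (\<phi> w) \<and> f w \<and> \<not> f (\<phi> w)"
  shows "real (card A) / 2 ^ (m + 1) \<le> dist_mono m f"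
proof -
  let ?V = "{real (card {x\<in>cube m. f x \<noteq> g x}) / 2 ^ m | g. monotone_cube m g}"
  have "?V \<subseteq> (\<lambda>k. real k / 2 ^ m) ` {..2 ^ m}"
  proof
    fix v assume "v \<in> ?V"
    then obtain g where v: "v = real (card {x\<in>cube m. f x \<noteq> g x}) / 2 ^ m" by blast
    have "card {x\<in>cube m. f x \<noteq> g x} \<le> card (cube m)"
      using finite_cube by (intro card_mono) auto
    then show "v \<in> (\<lambda>k. real k / 2 ^ m) ` {..2 ^ m}" using v card_cube by auto
  qed
  then have finV: "finite ?V" by (rule finite_subset) simp
  have "monotone_cube m (\<lambda>_. True)" by (simp add: monotone_cube_def)
  then have neV: "?V \<noteq> {}" by blast
  have "real (card A) / 2 ^ (m + 1) \<le> v" if "v \<in> ?V" for v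
  proof -
    obtain g where "monotone_cube m g" and v: "v = real (card {x\<in>cube m. f x \<noteq> g x}) / 2 ^ m"
      using \<open>v \<in> ?V\<close> by blast
    then have "real (card A) \<le> 2 * real (card {x\<in>cube m. f x \<noteq> g x})"
      using card_le_twice_disagreements[OF _ inj drop] by (metis of_nat_le_iff of_nat_mult of_nat_numeral)
    then show ?thesis by (simp add: v field_simps)
  qed
  then show ?thesis unfolding dist_mono_def using Min_ge_iff[OF finV neV] by blast
qed

definition block :: "nat \<Rightarrow> nat \<Rightarrow> nat set" where
  "block r j = {j * r..<j * r + r}"

definition full_blocks :: "nat \<Rightarrow> (nat \<Rightarrow> bool) \<Rightarrow> nat set" where
  "full_blocks r w = {j. j < 2 ^ (r - 1) \<and> (\<forall>t\<in>block r j. w t)}"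

definition pair_coord :: "nat \<Rightarrow> nat \<Rightarrow> (nat \<Rightarrow> bool) \<Rightarrow> nat" where
  "pair_coord n r w = n + Min (full_blocks r w) * 2 ^ (r - 1) + Max (full_blocks r w)"

definition pair_tribes :: "nat \<Rightarrow> nat \<Rightarrow> (nat \<Rightarrow> bool) \<Rightarrow> bool" where
  "pair_tribes n r w \<longleftrightarrow>
     3 \<le> card (full_blocks r w) \<or> (card (full_blocks r w) = 2 \<and> \<not> w (pair_coord n r w))"

lemma card_block: "card (block r j) = r"
  by (simp add: block_def)

lemma block_disjoint: "a \<noteq> b \<Longrightarrow> block r a \<inter> block r b = {}"
proof -
  have "block r a \<inter> block r b = {}" if "a < b" for a b
  proof -
    from that have "a * r + r \<le> b * r" by (metis Suc_leI add.commute mult_Suc mult_le_mono1)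
    then show ?thesis by (auto simp: block_def)
  qed
  then show "a \<noteq> b \<Longrightarrow> block r a \<inter> block r b = {}"
    by (metis inf_commute nat_neq_iff)
qed

lemma card_Union_blocks:
  assumes "finite J"
  shows "card (\<Union>j\<in>J. block r j) = card J * r"
proof -
  have "card (\<Union>j\<in>J. block r j) = (\<Sum>j\<in>J. card (block r j))"
    using assms block_disjoint by (intro card_UN_disjoint) (auto simp: block_def)
  then show ?thesis by (simp add: card_block)
qed

lemma full_blocks_subset: "full_blocks r w \<subseteq> {..<2 ^ (r - 1)}"
  by (auto simp: full_blocks_def)

lemma finite_full_blocks: "finite (full_blocks r w)"
  using full_blocks_subset finite_subset by blast

lemma full_blocks_mono: "(\<And>t. w t \<Longrightarrow> w' t) \<Longrightarrow> full_blocks r w \<subseteq> full_blocks r w'"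
  by (auto simp: full_blocks_def)

lemma Min_less_Max_if_card_2:
  fixes F :: "'a::linorder set"
  assumes "card F = 2"
  shows "Min F < Max F"
proof -
  obtain a b where F: "F = {a, b}" "a \<noteq> b" using assms by (auto simp: card_2_iff)
  then show ?thesis by (cases "a < b") auto
qed

locale block_setting =
  fixes n r :: nat
  assumes two_le_r: "2 \<le> r"
    and blocks_fit: "2 ^ (r - 1) * r \<le> n"
    and pairs_fit: "2 ^ (r - 1) * 2 ^ (r - 1) \<le> n"
    and blocks_long: "2 * n \<le> 4 ^ r"
begin

lemma two_r_le_n: "2 * r \<le> n"
proof -
  have "(2::nat) \<le> 2 ^ (r - 1)" using two_le_r power_increasing[of 1 "r - 1" "2::nat"] by simp
  then have "2 * r \<le> 2 ^ (r - 1) * r" by (rule mult_le_mono1)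
  then show ?thesis using blocks_fit by linarith
qed

lemma block_subset: "j < 2 ^ (r - 1) \<Longrightarrow> block r j \<subseteq> {..<n}"
proof -
  assume "j < 2 ^ (r - 1)"
  then have "j * r + r \<le> 2 ^ (r - 1) * r" by (metis Suc_leI add.commute mult_Suc mult_le_mono1)
  then show ?thesis using blocks_fit by (auto simp: block_def)
qed

lemma full_blocks_cong: "(\<And>t. t < n \<Longrightarrow> w t = w' t) \<Longrightarrow> full_blocks r w = full_blocks r w'"
  using block_subset unfolding full_blocks_def by blast

lemma pair_index_bounds:
  assumes "a < 2 ^ (r - 1)" "b < 2 ^ (r - 1)"
  shows "n + a * 2 ^ (r - 1) + b < 2 * n"
proof -
  have "a * 2 ^ (r - 1) + b < (a + 1) * 2 ^ (r - 1)" using assms(2) by simp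
  also have "\<dots> \<le> 2 ^ (r - 1) * 2 ^ (r - 1)" using assms(1) by (intro mult_le_mono1) simp
  finally show ?thesis using pairs_fit by simp
qed

lemma pair_coord_bounds:
  assumes "card (full_blocks r w) = 2"
  shows "n \<le> pair_coord n r w" "pair_coord n r w < 2 * n"
proof -
  have "full_blocks r w \<noteq> {}" using assms by auto
  then have "Min (full_blocks r w) < 2 ^ (r - 1)" "Max (full_blocks r w) < 2 ^ (r - 1)"
    using full_blocks_subset finite_full_blocks Min_in Max_in by blast+
  then show "n \<le> pair_coord n r w" "pair_coord n r w < 2 * n"
    unfolding pair_coord_def by (simp, rule pair_index_bounds)
qed

lemma full_blocks_upd_second_half:
  "n \<le> i \<Longrightarrow> full_blocks r (w(i := v)) = full_blocks r w"
  by (rule full_blocks_cong) auto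

lemma pair_coord_upd_second_half:
  "n \<le> i \<Longrightarrow> pair_coord n r (w(i := v)) = pair_coord n r w"
  by (simp add: pair_coord_def full_blocks_upd_second_half)

lemma pair_tribes_upd_first_half:
  assumes "i < n" "pair_tribes n r w"
  shows "pair_tribes n r (w(i := True))"
proof (cases "3 \<le> card (full_blocks r (w(i := True)))")
  case False
  have sub: "full_blocks r w \<subseteq> full_blocks r (w(i := True))" by (rule full_blocks_mono) auto
  then have "card (full_blocks r w) \<le> card (full_blocks r (w(i := True)))"
    by (simp add: card_mono finite_full_blocks)
  then have two: "card (full_blocks r w) = 2" and off: "\<not> w (pair_coord n r w)"
    using False assms(2) by (auto simp: pair_tribes_def)
  then have "full_blocks r (w(i := True)) = full_blocks r w"
    using False by (intro card_seteq[OF finite_full_blocks sub, symmetric]) simp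
  moreover have "i \<noteq> pair_coord n r w" using pair_coord_bounds[OF two] assms(1) by linarith
  ultimately show ?thesis using two off by (simp add: pair_tribes_def pair_coord_def)
qed (simp add: pair_tribes_def)

lemma neg_inf_first_half: "i < n \<Longrightarrow> neg_inf (2 * n) (pair_tribes n r) i = 0"
  by (rule neg_inf_eq_0I) (rule pair_tribes_upd_first_half)

lemma pair_tribes_drop_second_half:
  assumes "n \<le> i" "pair_tribes n r w" "\<not> pair_tribes n r (w(i := True))"
  shows "card (full_blocks r w) = 2" "pair_coord n r w = i"
proof -
  note same = full_blocks_upd_second_half[OF assms(1)] pair_coord_upd_second_half[OF assms(1)]
  have "\<not> 3 \<le> card (full_blocks r w)" using assms(3) same by (simp add: pair_tribes_def)
  with assms(2) show two: "card (full_blocks r w) = 2" by (simp add: pair_tribes_def)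
  with assms(2) have off: "\<not> w (pair_coord n r w)" by (simp add: pair_tribes_def)
  have "(w(i := True)) (pair_coord n r w)" using assms(3) same two by (simp add: pair_tribes_def)
  then show "pair_coord n r w = i" using off by (cases "pair_coord n r w = i") auto
qed

lemma pair_tribes_drop_full_blocks:
  assumes "n \<le> i" "pair_tribes n r w" "\<not> pair_tribes n r (w(i := True))"
  shows "(i - n) div 2 ^ (r - 1) \<in> full_blocks r w" "(i - n) mod 2 ^ (r - 1) \<in> full_blocks r w"
    "(i - n) div 2 ^ (r - 1) < (i - n) mod 2 ^ (r - 1)"
proof -
  note drop = pair_tribes_drop_second_half[OF assms]
  have "full_blocks r w \<noteq> {}" using drop(1) by auto
  then have in_F: "Min (full_blocks r w) \<in> full_blocks r w" "Max (full_blocks r w) \<in> full_blocks r w"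
    using finite_full_blocks Min_in Max_in by blast+
  then have "Max (full_blocks r w) < 2 ^ (r - 1)" using full_blocks_subset by blast
  moreover have "i - n = Min (full_blocks r w) * 2 ^ (r - 1) + Max (full_blocks r w)"
    unfolding drop(2)[symmetric] pair_coord_def by simp
  ultimately show "(i - n) div 2 ^ (r - 1) \<in> full_blocks r w" "(i - n) mod 2 ^ (r - 1) \<in> full_blocks r w"
    "(i - n) div 2 ^ (r - 1) < (i - n) mod 2 ^ (r - 1)"
    using in_F Min_less_Max_if_card_2[OF drop(1)] by simp_all
qed

lemma neg_inf_second_half:
  assumes "n \<le> i" "i < 2 * n"
  shows "neg_inf (2 * n) (pair_tribes n r) i \<le> 1 / real n"
proof -
  define a where "a = (i - n) div 2 ^ (r - 1)"
  define b where "b = (i - n) mod 2 ^ (r - 1)"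
  note drop = pair_tribes_drop_full_blocks[OF assms(1), folded a_def b_def]
  show ?thesis
  proof (cases "a < b")
    case True
    let ?S = "block r a \<union> block r b"
    have "b < 2 ^ (r - 1)" by (simp add: b_def)
    then have "block r a \<subseteq> {..<n}" "block r b \<subseteq> {..<n}" using True block_subset by simp_all
    then have "?S \<subseteq> {..<2 * n}" by auto
    moreover have "\<forall>t\<in>?S. w t" if "pair_tribes n r w" "\<not> pair_tribes n r (w(i := True))" for w
      using drop(1,2)[OF that] by (auto simp: full_blocks_def)
    ultimately have "neg_inf (2 * n) (pair_tribes n r) i \<le> 2 / 2 ^ card ?S"
      by (intro neg_inf_le_if_support) auto
    also have "card ?S = card (block r a) + card (block r b)"
      using block_disjoint[of a b r] True by (intro card_Un_disjoint) (simp_all add: block_def)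
    also have "\<dots> = 2 * r" by (simp add: card_block)
    also have "(2::real) / 2 ^ (2 * r) \<le> 1 / real n"
    proof -
      have "real (2 * n) \<le> real (4 ^ r)" using blocks_long by (rule of_nat_mono)
      then have "2 * real n \<le> 2 ^ (2 * r)" by (simp add: power_mult)
      moreover have "0 < real n" using two_r_le_n two_le_r by simp
      ultimately show ?thesis by (simp add: divide_simps)
    qed
    finally show ?thesis .
  next
    case False
    then have "neg_inf (2 * n) (pair_tribes n r) i = 0"
      using drop(3) by (intro neg_inf_eq_0I) blast
    then show ?thesis by simp
  qed
qed

lemma card_blocks_full_coord_off:
  assumes "J \<subseteq> {..<2 ^ (r - 1)}" "n \<le> p" "p < 2 * n"
  shows "card {w\<in>cube (2 * n). (\<forall>j\<in>J. \<forall>t\<in>block r j. w t) \<and> \<not> w p} = 2 ^ (2 * n - card J * r - 1)"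
proof -
  let ?U = "\<Union>j\<in>J. block r j"
  have "?U \<subseteq> {..<n}" using assms(1) block_subset by blast
  have "{w\<in>cube (2 * n). (\<forall>j\<in>J. \<forall>t\<in>block r j. w t) \<and> \<not> w p}
      = {w\<in>cube (2 * n). (\<forall>t\<in>?U. w t) \<and> (\<forall>t\<in>{p}. \<not> w t)}" by blast
  also have "card \<dots> = 2 ^ (2 * n - card ?U - card {p})"
    by (rule card_cube_fixed) (use \<open>?U \<subseteq> {..<n}\<close> assms(2,3) in auto)
  also have "card ?U = card J * r"
    using assms(1) by (intro card_Union_blocks) (rule finite_subset, auto)
  finally show ?thesis by simp
qed

lemma card_full_blocks_eq_pair:
  assumes ab: "a < b" "b < 2 ^ (r - 1)"
  shows "2 ^ (r - 1) * 2 ^ (2 * n - 3 * r - 1)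
    \<le> card {w\<in>cube (2 * n). full_blocks r w = {a, b} \<and> \<not> w (n + a * 2 ^ (r - 1) + b)}"
proof -
  let ?s = "2 ^ (r - 1) :: nat" and ?E = "2 * n - 3 * r - 1"
  define p where "p = n + a * ?s + b"
  define X where "X = {w\<in>cube (2 * n). (\<forall>j\<in>{a, b}. \<forall>t\<in>block r j. w t) \<and> \<not> w p}"
  define Y where "Y l = {w\<in>cube (2 * n). (\<forall>j\<in>{a, b, l}. \<forall>t\<in>block r j. w t) \<and> \<not> w p}" for l
  define L where "L = {..<?s} - {a, b}"
  have p: "n \<le> p" "p < 2 * n" unfolding p_def using ab pair_index_bounds by simp_all
  have exps: "2 * n - 2 * r - 1 = r + ?E" "2 * n - 3 * r - 1 = ?E"
    using two_r_le_n two_le_r by auto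
  have "card X = 2 ^ (2 * n - card {a, b} * r - 1)"
    unfolding X_def using ab by (intro card_blocks_full_coord_off p) auto
  also have "card {a, b} * r = 2 * r" using ab by simp
  also have "(2::nat) ^ (2 * n - 2 * r - 1) = 2 ^ r * 2 ^ ?E" by (simp only: exps(1) power_add)
  finally have "card X = 2 ^ r * 2 ^ ?E" .
  moreover have "card (\<Union>l\<in>L. Y l) \<le> ?s * 2 ^ ?E"
  proof -
    have "card (Y l) = 2 ^ ?E" if "l \<in> L" for l
      using card_blocks_full_coord_off[of "{a, b, l}", OF _ p] that ab
      by (auto simp: Y_def L_def exps)
    then have "card (\<Union>l\<in>L. Y l) \<le> card L * 2 ^ ?E"
      using card_UN_le[of L Y] by (simp add: L_def)
    also have "card L \<le> card {..<?s}" unfolding L_def by (intro card_mono) auto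
    finally show ?thesis by simp
  qed
  moreover have "X - (\<Union>l\<in>L. Y l) \<subseteq> {w\<in>cube (2 * n). full_blocks r w = {a, b} \<and> \<not> w p}"
  proof
    fix w assume w: "w \<in> X - (\<Union>l\<in>L. Y l)"
    then have "{a, b} \<subseteq> full_blocks r w" using ab by (auto simp: X_def full_blocks_def)
    moreover have "full_blocks r w \<subseteq> {a, b}"
      using w by (auto simp: X_def Y_def L_def full_blocks_def)
    ultimately show "w \<in> {w\<in>cube (2 * n). full_blocks r w = {a, b} \<and> \<not> w p}"
      using w by (auto simp: X_def)
  qed
  then have "card (X - (\<Union>l\<in>L. Y l)) \<le> card {w\<in>cube (2 * n). full_blocks r w = {a, b} \<and> \<not> w p}"
    by (intro card_mono) (simp add: finite_cube)
  moreover have "card X - card (\<Union>l\<in>L. Y l) \<le> card (X - (\<Union>l\<in>L. Y l))"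
    by (rule diff_card_le_card_Diff) (simp add: L_def Y_def finite_cube)
  moreover have "(2::nat) ^ r = 2 * ?s" using two_le_r by (cases r) simp_all
  then have "(2::nat) ^ r * 2 ^ ?E - ?s * 2 ^ ?E = ?s * 2 ^ ?E" by simp
  ultimately show ?thesis unfolding p_def by linarith
qed

lemma card_two_full_blocks:
  "2 ^ (2 * n - 6) \<le> card {w\<in>cube (2 * n). card (full_blocks r w) = 2 \<and> \<not> w (pair_coord n r w)}"
proof -
  let ?s = "2 ^ (r - 1) :: nat" and ?h = "2 ^ (r - 2) :: nat" and ?E = "2 * n - 3 * r - 1"
  define P where "P = {..<?h} \<times> {?h..<?s}"
  define B where "B q = {w\<in>cube (2 * n). full_blocks r w = {fst q, snd q} \<and> \<not> w (n + fst q * ?s + snd q)}"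
    for q
  have "r - 1 = Suc (r - 2)" using two_le_r by simp
  then have s_eq: "?s = 2 * ?h" by simp
  then have P: "fst q < snd q" "snd q < ?s" if "q \<in> P" for q using that by (auto simp: P_def)
  have "\<forall>q\<in>P. \<forall>q'\<in>P. q \<noteq> q' \<longrightarrow> B q \<inter> B q' = {}"
  proof (intro ballI impI)
    fix q q' assume "q \<in> P" "q' \<in> P" "q \<noteq> q'"
    then have "{fst q, snd q} \<noteq> {fst q', snd q'}"
      using P[OF \<open>q \<in> P\<close>] P[OF \<open>q' \<in> P\<close>] by (cases q, cases q') (auto simp: doubleton_eq_iff)
    then show "B q \<inter> B q' = {}" by (auto simp: B_def)
  qed
  then have "card (\<Union>q\<in>P. B q) = (\<Sum>q\<in>P. card (B q))"
    by (intro card_UN_disjoint) (simp_all add: P_def B_def finite_cube)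
  also have "(\<Sum>q\<in>P. card (B q)) \<ge> (\<Sum>q\<in>P. ?s * 2 ^ ?E)"
    using card_full_blocks_eq_pair P by (intro sum_mono) (simp add: B_def)
  moreover have "card P = ?h * ?h" using s_eq by (simp add: P_def card_cartesian_product)
  ultimately have "?h * ?h * (?s * 2 ^ ?E) \<le> card (\<Union>q\<in>P. B q)" by simp
  also have "\<dots> \<le> card {w\<in>cube (2 * n). card (full_blocks r w) = 2 \<and> \<not> w (pair_coord n r w)}"
  proof (intro card_mono subsetI)
    fix w assume "w \<in> (\<Union>q\<in>P. B q)"
    then obtain q where "q \<in> P" "w \<in> B q" by blast
    with P[OF \<open>q \<in> P\<close>] show "w \<in> {w\<in>cube (2 * n). card (full_blocks r w) = 2 \<and> \<not> w (pair_coord n r w)}"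
      by (auto simp: B_def pair_coord_def)
  qed (simp add: finite_cube)
  also have "?h * ?h * (?s * 2 ^ ?E) = 2 ^ (2 * n - 6)"
  proof -
    have "2 * n - 6 = (r - 2) + (r - 2) + ((r - 1) + ?E)" using two_r_le_n two_le_r by linarith
    then show ?thesis by (simp only: power_add)
  qed
  finally show ?thesis .
qed

lemma dist_mono_pair_tribes: "1 / 128 \<le> dist_mono (2 * n) (pair_tribes n r)"
proof -
  define A where "A = {w\<in>cube (2 * n). card (full_blocks r w) = 2 \<and> \<not> w (pair_coord n r w)}"
  define raise where "raise w = w(pair_coord n r w := True)" for w
  have raise_props: "raise w \<in> cube (2 * n) \<and> pleq w (raise w) \<and> pair_tribes n r w \<and>
      \<not> pair_tribes n r (raise w) \<and> pair_coord n r (raise w) = pair_coord n r w" if "w \<in> A" for w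
  proof -
    have two: "card (full_blocks r w) = 2" and off: "\<not> w (pair_coord n r w)" and "w \<in> cube (2 * n)"
      using that by (auto simp: A_def)
    note bounds = pair_coord_bounds[OF two]
    have "raise w \<in> cube (2 * n)" using \<open>w \<in> cube (2 * n)\<close> bounds by (auto simp: cube_def raise_def)
    then show ?thesis
      using two off bounds full_blocks_upd_second_half pair_coord_upd_second_half
      by (simp add: raise_def pleq_def pair_tribes_def)
  qed
  have "inj_on raise A"
  proof (rule inj_onI)
    fix v w assume "v \<in> A" "w \<in> A" and eq: "raise v = raise w"
    then have "pair_coord n r v = pair_coord n r w"
      using raise_props[OF \<open>v \<in> A\<close>] raise_props[OF \<open>w \<in> A\<close>] by simp
    moreover have "\<not> v (pair_coord n r v)" "\<not> w (pair_coord n r w)"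
      using \<open>v \<in> A\<close> \<open>w \<in> A\<close> by (simp_all add: A_def)
    ultimately have "v x = w x" for x
      using fun_cong[OF eq, of x] by (cases "x = pair_coord n r w") (auto simp: raise_def)
    then show "v = w" by blast
  qed
  then have "real (card A) / 2 ^ (2 * n + 1) \<le> dist_mono (2 * n) (pair_tribes n r)"
    using raise_props by (intro dist_mono_ge_card_drops) (auto simp: A_def)
  moreover have "1 / 128 \<le> real (card A) / 2 ^ (2 * n + 1)"
  proof -
    have "real (2 ^ (2 * n - 6)) \<le> real (card A)"
      using card_two_full_blocks unfolding A_def by (rule of_nat_mono)
    moreover have "2 * n + 1 = 7 + (2 * n - 6)" using two_r_le_n two_le_r by linarith
    then have "(2::real) ^ (2 * n + 1) = 128 * 2 ^ (2 * n - 6)" by (simp only: power_add) simp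
    ultimately show ?thesis by simp
  qed
  ultimately show ?thesis by linarith
qed

end

lemma block_setting_power_of_2:
  assumes "2 \<le> k"
  shows "block_setting (2 ^ k) (k div 2 + 1)"
proof
  define q where "q = k div 2"
  have q: "2 * q \<le> k" "k \<le> 2 * q + 1" by (simp_all add: q_def)
  show "2 \<le> k div 2 + 1" using assms by simp
  have "(2::nat) ^ q * 2 ^ q = 2 ^ (2 * q)" by (simp flip: power_add)
  also have "\<dots> \<le> 2 ^ k" using q by (intro power_increasing) auto
  finally show "2 ^ (k div 2 + 1 - 1) * 2 ^ (k div 2 + 1 - 1) \<le> (2::nat) ^ k" by (simp add: q_def)
  have "q + 1 \<le> (2::nat) ^ q" using less_exp[of q] by linarith
  also have "\<dots> \<le> 2 ^ (k - q)" using q by (intro power_increasing) auto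
  finally have "(2::nat) ^ q * (q + 1) \<le> 2 ^ q * 2 ^ (k - q)" by (rule mult_le_mono2)
  also have "\<dots> = 2 ^ k" using q by (simp flip: power_add)
  finally show "2 ^ (k div 2 + 1 - 1) * (k div 2 + 1) \<le> (2::nat) ^ k" by (simp add: q_def)
  have "2 * (2::nat) ^ k = 2 ^ (k + 1)" by simp
  also have "\<dots> \<le> 2 ^ (2 * (q + 1))" using q by (intro power_increasing) auto
  also have "\<dots> = 4 ^ (q + 1)" by (simp add: power_mult)
  finally show "2 * 2 ^ k \<le> (4::nat) ^ (k div 2 + 1)" by (simp add: q_def)
qed

lemma exists_low_neg_inf_far_from_monotone:
  assumes "2 \<le> k" "n = 2 ^ k"
  shows "\<exists>f :: (nat \<Rightarrow> bool) \<Rightarrow> bool.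
           (\<forall>i<n. neg_inf (2 * n) f i = 0) \<and>
           (\<forall>i. n \<le> i \<and> i < 2 * n \<longrightarrow> neg_inf (2 * n) f i \<le> 1 / real n) \<and>
           1 / 128 \<le> dist_mono (2 * n) f"
proof -
  interpret block_setting n "k div 2 + 1"
    using block_setting_power_of_2[OF assms(1)] assms(2) by simp
  show ?thesis
    using neg_inf_first_half neg_inf_second_half dist_mono_pair_tribes by blast
qed

lemma exists_neg_inf_below_log_bound:
  assumes "c > 0"
  shows "\<exists>m f. 1 \<le> m \<and> (\<forall>i<m. neg_inf m f i < c * dist_mono m f * (ln (real m) / real m))"
proof -
  obtain N :: nat where N: "256 / (c * ln 2) < real N" using reals_Archimedean2 by blast
  define n :: nat where "n = 2 ^ (N + 2)"
  obtain f where first_half: "\<forall>i<n. neg_inf (2 * n) f i = 0"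
    and second_half: "\<forall>i. n \<le> i \<and> i < 2 * n \<longrightarrow> neg_inf (2 * n) f i \<le> 1 / real n"
    and far: "1 / 128 \<le> dist_mono (2 * n) f"
    using exists_low_neg_inf_far_from_monotone[OF _ n_def] by auto
  have n_pos: "0 < real n" by (simp add: n_def)
  have "256 < real N * (c * ln 2)" using N assms by (simp add: pos_divide_less_eq)
  also have "\<dots> \<le> real (N + 3) * (c * ln 2)" using assms by (intro mult_right_mono) simp_all
  also have "\<dots> = c * ln (real (2 * n))" by (simp add: n_def ln_realpow flip: power_Suc)
  finally have "1 / real n < c * (1 / 128) * (ln (real (2 * n)) / real (2 * n))"
    using n_pos by (simp add: field_simps)
  also have "\<dots> \<le> c * dist_mono (2 * n) f * (ln (real (2 * n)) / real (2 * n))"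
    using far assms n_pos by (intro mult_right_mono mult_left_mono) auto
  finally have bound: "1 / real n < c * dist_mono (2 * n) f * (ln (real (2 * n)) / real (2 * n))" .
  have "neg_inf (2 * n) f i \<le> 1 / real n" if "i < 2 * n" for i
    using first_half second_half n_pos that by (cases "i < n") auto
  then have "neg_inf (2 * n) f i < c * dist_mono (2 * n) f * (ln (real (2 * n)) / real (2 * n))"
    if "i < 2 * n" for i
    using bound that by fastforce
  then show ?thesis using n_pos by (intro exI[of _ "2 * n"] exI[of _ f]) simp
qed

theorem mainTheorem1:
  shows "(\<exists>C c :: real. \<exists>n0 :: nat. C > 0 \<and> c > 0 \<and>
           (\<forall>n k. n \<ge> n0 \<and> n = 2 ^ k \<longrightarrow>
              (\<exists>f :: (nat \<Rightarrow> bool) \<Rightarrow> bool.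
                 (\<forall>i<n. neg_inf (2 * n) f i = 0) \<and>
                 (\<forall>i. n \<le> i \<and> i < 2 * n \<longrightarrow> neg_inf (2 * n) f i \<le> C / real n) \<and>
                 dist_mono (2 * n) f \<ge> c)))
       \<and> \<not> (\<exists>c' :: real. c' > 0 \<and>
           (\<forall>m :: nat. \<forall>f :: (nat \<Rightarrow> bool) \<Rightarrow> bool. m \<ge> 1 \<longrightarrow>
              (\<exists>i<m. neg_inf m f i \<ge> c' * dist_mono m f * (ln (real m) / real m))))"
    (is "?construction \<and> \<not> ?log_bound")
proof (intro conjI notI)
  have "2 \<le> k" if "4 \<le> n" "n = 2 ^ k" for n k :: nat
    using that power_le_imp_le_exp[of 2 2 k] by simp
  then show ?construction
    using exists_low_neg_inf_far_from_monotone
    by (intro exI[of _ 1] exI[of _ "1 / 128"] exI[of _ 4]) auto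
next
  assume ?log_bound
  then show False using exists_neg_inf_below_log_bound by (meson not_less)
qed

end
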